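(* For all positive integers $p,q$, \[ L_s(p,q) \geq 2^{\frac{pq(q-1)}{2}}\, N_s(q)^{\frac{p(p-1)}{2}} - 1. \]
   Context: All graphs are simple undirected labeled graphs on the vertex set $\{1,\dots,n\}$. For such a graph with adjacency matrix $W$ and degree matrix $D$, its Laplacian is $L = D - W$; if the graph has at least one edge, its normalized Laplacian matrix is $\frac{1}{\mathrm{Tr}(L)}L$, which is a density matrix (Hermitian, positive semidefinite, trace $1$). An $n\times n$ density matrix $\rho$ with $n=pq$ is separable in $\mathbb{C}^p\otimes\mathbb{C}^q$ if $\rho=\sum_i c_i\,\rho_i\otimes\eta_i$ (finite sum) where the $\rho_i$ are $p\times p$ density matrices, the $\eta_i$ are $q\times q$ density matrices, $c_i\ge 0$ and $\sum_i c_i=1$; otherwise it is entangled. $L_s(p,q)$ denotes the number of labeled graphs on $n=pq$ vertices with at least one edge whose normalized Laplacian matrix is separable in $\mathbb{C}^p\otimes\mathbb{C}^q$, and $L_e(p,q)$ the number of those whose normalized Laplacian is entangled; thus $L_s(p,q)+L_e(p,q)=L(pq):=2^{pq(pq-1)/2}-1$. A square matrix is line sum symmetric if for each $i$ its $i$-th row sum equals its $i$-th column sum. $N_s(n)$ denotes the number of $n\times n$ matrices with entries in $\{0,1\}$ that are line sum symmetric, and $N_e(n)=2^{n^2}-N_s(n)$ the number of $n\times n$ $0$-$1$ matrices that are not line sum symmetric. *)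

theory Defs
  imports Complex_Main
begin

text \<open>Vertices of a graph on n vertices are 0,...,n-1 (a relabelling of 1..n).
  Square matrices of size m are functions nat => nat => complex whose entries
  with indices < m are relevant.\<close>

definition all_edges :: "nat \<Rightarrow> nat set set" where
  "all_edges n = {{i, j} | i j. i < n \<and> j < n \<and> i \<noteq> j}"

definition graphs :: "nat \<Rightarrow> nat set set set" where
  "graphs n = {E. E \<subseteq> all_edges n}"

definition adjacency :: "nat set set \<Rightarrow> nat \<Rightarrow> nat \<Rightarrow> complex" where
  "adjacency E i j = (if {i, j} \<in> E then 1 else 0)"

definition degree :: "nat set set \<Rightarrow> nat \<Rightarrow> nat" where
  "degree E i = card {j. {i, j} \<in> E}"

definition laplacian :: "nat set set \<Rightarrow> nat \<Rightarrow> nat \<Rightarrow> complex" where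
  "laplacian E i j = (if i = j then of_nat (degree E i) else 0) - adjacency E i j"

definition mtrace :: "nat \<Rightarrow> (nat \<Rightarrow> nat \<Rightarrow> complex) \<Rightarrow> complex" where
  "mtrace m A = (\<Sum>i<m. A i i)"

definition normalized_laplacian :: "nat \<Rightarrow> nat set set \<Rightarrow> nat \<Rightarrow> nat \<Rightarrow> complex" where
  "normalized_laplacian n E i j = laplacian E i j / mtrace n (laplacian E)"

definition hermitian_mat :: "nat \<Rightarrow> (nat \<Rightarrow> nat \<Rightarrow> complex) \<Rightarrow> bool" where
  "hermitian_mat m A \<longleftrightarrow> (\<forall>i<m. \<forall>j<m. A i j = cnj (A j i))"

definition psd_mat :: "nat \<Rightarrow> (nat \<Rightarrow> nat \<Rightarrow> complex) \<Rightarrow> bool" where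
  "psd_mat m A \<longleftrightarrow> hermitian_mat m A \<and>
     (\<forall>x :: nat \<Rightarrow> complex. 0 \<le> Re (\<Sum>i<m. \<Sum>j<m. cnj (x i) * A i j * x j))"

definition density_mat :: "nat \<Rightarrow> (nat \<Rightarrow> nat \<Rightarrow> complex) \<Rightarrow> bool" where
  "density_mat m A \<longleftrightarrow> psd_mat m A \<and> mtrace m A = 1"

text \<open>Separability in C^p (x) C^q, with basis index (a,b) (a<p, b<q) identified with
  a*q+b, i.e. the Kronecker product (R (x) S) (a*q+b) (c*q+d) = R a c * S b d.\<close>

definition separable :: "nat \<Rightarrow> nat \<Rightarrow> (nat \<Rightarrow> nat \<Rightarrow> complex) \<Rightarrow> bool" where
  "separable p q \<rho> \<longleftrightarrow>
     (\<exists>(k::nat) (c::nat \<Rightarrow> real) (R::nat \<Rightarrow> nat \<Rightarrow> nat \<Rightarrow> complex) (S::nat \<Rightarrow> nat \<Rightarrow> nat \<Rightarrow> complex).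
        (\<forall>l<k. c l \<ge> 0 \<and> density_mat p (R l) \<and> density_mat q (S l)) \<and>
        (\<Sum>l<k. c l) = 1 \<and>
        (\<forall>x<p*q. \<forall>y<p*q. \<rho> x y =
            (\<Sum>l<k. of_real (c l) * R l (x div q) (y div q) * S l (x mod q) (y mod q))))"

definition L_s :: "nat \<Rightarrow> nat \<Rightarrow> nat" where
  "L_s p q = card {E \<in> graphs (p*q). E \<noteq> {} \<and> separable p q (normalized_laplacian (p*q) E)}"

definition line_sum_symmetric :: "nat \<Rightarrow> (nat \<Rightarrow> nat \<Rightarrow> nat) \<Rightarrow> bool" where
  "line_sum_symmetric n M \<longleftrightarrow> (\<forall>i<n. (\<Sum>j<n. M i j) = (\<Sum>j<n. M j i))"

definition zero_one_mats :: "nat \<Rightarrow> (nat \<Rightarrow> nat \<Rightarrow> nat) set" where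
  "zero_one_mats n = {M. (\<forall>i j. M i j \<in> {0, 1}) \<and> (\<forall>i j. \<not> (i < n \<and> j < n) \<longrightarrow> M i j = 0)}"

definition N_s :: "nat \<Rightarrow> nat" where
  "N_s n = card {M \<in> zero_one_mats n. line_sum_symmetric n M}"

end

theory Submission
  imports Defs "HOL-Library.FuncSet" "HOL-Library.Real_Mod"
begin

text \<open>
  Split the vertices into \<open>p\<close> blocks of \<open>q\<close> consecutive vertices.  Every
  graph whose off-diagonal \<open>q \<times> q\<close> blocks of the adjacency matrix are line sum symmetric has a
  separable Laplacian, and there are \<open>2\<^bsup>p q(q-1)/2\<^esup> N\<^sub>s(q)\<^bsup>p(p-1)/2\<^esup>\<close> such graphs
  (an arbitrary graph inside each block, a line sum symmetric 0-1 matrix between each pair of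
  blocks); only the empty one among them is excluded from \<open>L\<^sub>s(p,q)\<close>.

  Separability is proved through the convex cone spanned by products \<open>(u u\<^sup>*) \<otimes> (w w\<^sup>*)\<close>,
  whose members normalise to separable states.  The Laplacian is the sum of its edge Laplacians;
  an edge inside a block is itself such a product, and the edges between two blocks form a balanced
  digraph, which decomposes into cycles.  The Laplacian of a cycle is an average, over the
  \<open>m\<close>-th roots of unity \<open>\<zeta>\<close>, of products built from \<open>e\<^sub>a - \<zeta>\<^sup>* e\<^sub>c\<close> and
  \<open>\<Sum>\<^sub>t \<zeta>\<^sup>t e\<^bsub>cs!t\<^esub>\<close>.  The counting part constructs the block graphs from their data
  by an injective gluing map.
\<close>

section \<open>Block indexing of \<open>\<complex>\<^sup>p \<otimes> \<complex>\<^sup>q\<close>\<close>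

text \<open>The basis vector with index \<open>(a,b)\<close>, \<open>a < p\<close>, \<open>b < q\<close>, of the tensor product is
  numbered \<open>a*q + b\<close>; vertex \<open>x\<close> of the graph lies in block \<open>x div q\<close> at position \<open>x mod q\<close>.\<close>

lemma block_index_lt: "a < p \<Longrightarrow> b < (q::nat) \<Longrightarrow> a*q + b < p*q"
proof -
  assume "a < p" "b < q"
  hence "a*q + b < (a+1)*q" by simp
  also have "\<dots> \<le> p*q" using \<open>a < p\<close> by (intro mult_right_mono) auto
  finally show ?thesis .
qed

lemma block_index_div [simp]: "b < (q::nat) \<Longrightarrow> (a*q + b) div q = a"
  and block_index_mod [simp]: "b < (q::nat) \<Longrightarrow> (a*q + b) mod q = b"
  by simp_all

lemma block_index_eq_iff:
  "b < (q::nat) \<Longrightarrow> b' < q \<Longrightarrow> a*q + b = a'*q + b' \<longleftrightarrow> a = a' \<and> b = b'"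
  by (metis block_index_div block_index_mod)

lemma block_of_lt: "x < p*q \<Longrightarrow> x div (q::nat) < p"
  by (simp add: less_mult_imp_div_less)

lemma sum_block_index:
  fixes f :: "nat \<Rightarrow> nat \<Rightarrow> 'a::comm_monoid_add"
  assumes "q > 0"
  shows "(\<Sum>x<p*q. f (x div q) (x mod q)) = (\<Sum>a<p. \<Sum>b<q. f a b)"
proof -
  have "bij_betw (\<lambda>(a,b). a*q + b) ({..<p} \<times> {..<q}) {..<p*q}"
  proof (rule bij_betw_imageI)
    show "inj_on (\<lambda>(a,b). a*q + b) ({..<p} \<times> {..<q})"
      by (auto simp: inj_on_def block_index_eq_iff)
    have "x \<in> (\<lambda>(a,b). a*q + b) ` ({..<p} \<times> {..<q})" if "x < p*q" for x
      using that assms block_of_lt[OF that]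
      by (intro image_eqI[of _ _ "(x div q, x mod q)"]) auto
    thus "(\<lambda>(a,b). a*q + b) ` ({..<p} \<times> {..<q}) = {..<p*q}"
      by (auto intro: block_index_lt)
  qed
  hence "(\<Sum>x<p*q. f (x div q) (x mod q))
      = (\<Sum>z\<in>{..<p} \<times> {..<q}. f ((fst z*q + snd z) div q) ((fst z*q + snd z) mod q))"
    by (subst sum.reindex_bij_betw[symmetric]) (auto simp: case_prod_beta)
  also have "\<dots> = (\<Sum>z\<in>{..<p} \<times> {..<q}. f (fst z) (snd z))"
    by (intro sum.cong) auto
  finally show ?thesis by (simp add: sum.cartesian_product case_prod_beta)
qed

section \<open>A cone of separable matrices\<close>

definition kron_rank1 :: "nat \<Rightarrow> real \<Rightarrow> (nat \<Rightarrow> complex) \<Rightarrow> (nat \<Rightarrow> complex) \<Rightarrow> nat \<Rightarrow> nat \<Rightarrow> complex"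
  where "kron_rank1 q c u w x y =
    of_real c * u (x div q) * cnj (u (y div q)) * w (x mod q) * cnj (w (y mod q))"

text \<open>The convex cone generated by these products; every nonzero member of it becomes separable
  after normalising its trace (\<open>sep_cone_separable\<close> below).\<close>

inductive sep_cone :: "nat \<Rightarrow> (nat \<Rightarrow> nat \<Rightarrow> complex) \<Rightarrow> bool" for q where
  zero: "sep_cone q (\<lambda>x y. 0)"
| add_kron: "sep_cone q A \<Longrightarrow> c \<ge> 0 \<Longrightarrow> sep_cone q (\<lambda>x y. A x y + kron_rank1 q c u w x y)"

lemma sep_cone_kron: "c \<ge> 0 \<Longrightarrow> sep_cone q (kron_rank1 q c u w)"
  using sep_cone.add_kron[OF sep_cone.zero, of c q u w] by simp

lemma sep_cone_add:
  assumes "sep_cone q A" "sep_cone q B"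
  shows "sep_cone q (\<lambda>x y. A x y + B x y)"
  using assms(2)
proof induction
  case zero
  thus ?case using assms(1) by simp
next
  case (add_kron B c u w)
  from sep_cone.add_kron[OF add_kron.IH add_kron.hyps(2)] show ?case
    by (simp add: add.assoc)
qed

lemma sep_cone_sum:
  assumes "finite I" "\<And>i. i \<in> I \<Longrightarrow> sep_cone q (F i)"
  shows "sep_cone q (\<lambda>x y. \<Sum>i\<in>I. F i x y)"
  using assms
proof (induction I rule: finite_induct)
  case empty
  thus ?case by (simp add: sep_cone.zero)
next
  case (insert i I)
  hence "sep_cone q (\<lambda>x y. F i x y + (\<Sum>i\<in>I. F i x y))"
    by (intro sep_cone_add) auto
  thus ?case using insert by simp
qed

lemma sep_cone_sum_repr:
  assumes "sep_cone q A"
  shows "\<exists>k c u w. (\<forall>l<k. c l \<ge> 0) \<and> A = (\<lambda>x y. \<Sum>l<(k::nat). kron_rank1 q (c l) (u l) (w l) x y)"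
  using assms
proof induction
  case zero
  show ?case by (rule exI[of _ 0]) simp
next
  case (add_kron A c0 u0 w0)
  then obtain k :: nat and c u w where c: "\<forall>l<k. c l \<ge> 0"
    and A: "A = (\<lambda>x y. \<Sum>l<k. kron_rank1 q (c l) (u l) (w l) x y)" by blast
  let ?c = "c(k := c0)" and ?u = "u(k := u0)" and ?w = "w(k := w0)"
  have "(\<Sum>l<k. kron_rank1 q (?c l) (?u l) (?w l) x y) = (\<Sum>l<k. kron_rank1 q (c l) (u l) (w l) x y)"
    for x y by (intro sum.cong) auto
  hence "(\<lambda>x y. A x y + kron_rank1 q c0 u0 w0 x y)
      = (\<lambda>x y. \<Sum>l<Suc k. kron_rank1 q (?c l) (?u l) (?w l) x y)"
    by (simp add: A)
  moreover have "\<forall>l<Suc k. ?c l \<ge> 0" using c add_kron.hyps(2) by auto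
  ultimately show ?case by blast
qed

lemma mult_cnj_real: "z * cnj z = complex_of_real ((cmod z)\<^sup>2)"
  by (simp add: complex_mult_cnj cmod_power2)

text \<open>The outer product \<open>v v\<^sup>*\<close> is \<open>\<parallel>v\<parallel>\<^sup>2\<close> times a density matrix (a pure state); when \<open>v = 0\<close>
  any pure state will do.\<close>

lemma rank_one_density:
  fixes v :: "nat \<Rightarrow> complex"
  assumes "m \<ge> 1"
  shows "\<exists>R. density_mat m R \<and>
    (\<forall>i<m. \<forall>j<m. v i * cnj (v j) = of_real (\<Sum>k<m. (cmod (v k))\<^sup>2) * R i j)"
proof -
  define e0 :: "nat \<Rightarrow> complex" where "e0 i = (if i = 0 then 1 else 0)" for i
  define norm2 where "norm2 z = (\<Sum>k<m. (cmod (z k))\<^sup>2)" for z :: "nat \<Rightarrow> complex"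
  define z where "z = (if norm2 v > 0 then v else e0)"
  define R where "R i j = z i * cnj (z j) / of_real (norm2 z)" for i j
  have "norm2 e0 = (\<Sum>k\<in>{0}. (cmod (e0 k))\<^sup>2)"
    unfolding norm2_def by (rule sum.mono_neutral_right) (use assms in \<open>auto simp: e0_def\<close>)
  hence z_pos: "norm2 z > 0" by (simp add: z_def e0_def)
  have quad: "(\<Sum>i<m. \<Sum>j<m. cnj (x i) * R i j * x j)
      = of_real ((cmod (\<Sum>i<m. cnj (x i) * z i))\<^sup>2 / norm2 z)" for x
  proof -
    let ?s = "\<Sum>i<m. cnj (x i) * z i"
    have "(\<Sum>i<m. \<Sum>j<m. cnj (x i) * R i j * x j)
        = (\<Sum>i<m. \<Sum>j<m. (cnj (x i) * z i) * cnj (cnj (x j) * z j)) / of_real (norm2 z)"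
      by (simp add: R_def sum_divide_distrib mult_ac)
    also have "\<dots> = ?s * cnj ?s / of_real (norm2 z)" by (simp add: sum_product)
    also have "\<dots> = of_real ((cmod ?s)\<^sup>2 / norm2 z)" by (simp only: mult_cnj_real) simp
    finally show ?thesis .
  qed
  have "mtrace m R = (\<Sum>i<m. of_real ((cmod (z i))\<^sup>2)) / of_real (norm2 z)"
    unfolding mtrace_def R_def by (simp add: sum_divide_distrib mult_cnj_real)
  also have "\<dots> = of_real (norm2 z) / of_real (norm2 z)" unfolding norm2_def by (simp only: of_real_sum)
  finally have "mtrace m R = 1" using z_pos by simp
  moreover have "hermitian_mat m R" unfolding hermitian_mat_def R_def by (simp add: mult.commute)
  ultimately have "density_mat m R"
    unfolding density_mat_def psd_mat_def using quad z_pos by simp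
  moreover have "v i * cnj (v j) = of_real (norm2 v) * R i j" if "i < m" "j < m" for i j
  proof (cases "norm2 v > 0")
    case True
    thus ?thesis by (simp add: R_def z_def)
  next
    case False
    moreover have "norm2 v \<ge> 0" unfolding norm2_def by (simp add: sum_nonneg)
    ultimately have "norm2 v = 0" by simp
    hence "v i = 0" unfolding norm2_def using that by (simp add: sum_nonneg_eq_0_iff)
    thus ?thesis using \<open>norm2 v = 0\<close> by simp
  qed
  ultimately show ?thesis unfolding norm2_def by blast
qed

definition product_term ::
  "nat \<Rightarrow> nat \<Rightarrow> (nat \<Rightarrow> nat \<Rightarrow> complex) \<Rightarrow> real \<Rightarrow> (nat \<Rightarrow> nat \<Rightarrow> complex) \<Rightarrow> (nat \<Rightarrow> nat \<Rightarrow> complex) \<Rightarrow> bool"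
  where "product_term p q A d R S \<longleftrightarrow> d \<ge> 0 \<and> density_mat p R \<and> density_mat q S \<and>
    (\<forall>x<p*q. \<forall>y<p*q. A x y = of_real d * R (x div q) (y div q) * S (x mod q) (y mod q))"

lemma kron_rank1_product_term:
  assumes "p \<ge> 1" "q \<ge> 1" "c \<ge> 0"
  shows "\<exists>d R S. product_term p q (kron_rank1 q c u w) d R S"
proof -
  obtain R where R: "density_mat p R"
    "\<forall>i<p. \<forall>j<p. u i * cnj (u j) = of_real (\<Sum>k<p. (cmod (u k))\<^sup>2) * R i j"
    using rank_one_density[OF assms(1)] by blast
  obtain S where S: "density_mat q S"
    "\<forall>i<q. \<forall>j<q. w i * cnj (w j) = of_real (\<Sum>k<q. (cmod (w k))\<^sup>2) * S i j"
    using rank_one_density[OF assms(2)] by blast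
  let ?d = "c * (\<Sum>k<p. (cmod (u k))\<^sup>2) * (\<Sum>k<q. (cmod (w k))\<^sup>2)"
  have "kron_rank1 q c u w x y = of_real ?d * R (x div q) (y div q) * S (x mod q) (y mod q)"
    if "x < p*q" "y < p*q" for x y
  proof -
    have "kron_rank1 q c u w x y
        = of_real c * (u (x div q) * cnj (u (y div q))) * (w (x mod q) * cnj (w (y mod q)))"
      by (simp add: kron_rank1_def mult_ac)
    thus ?thesis using R(2) S(2) that assms(2) block_of_lt by (simp add: mult_ac)
  qed
  moreover have "?d \<ge> 0" using assms(3) by (simp add: sum_nonneg)
  ultimately show ?thesis using R(1) S(1) unfolding product_term_def by blast
qed

lemma trace_product_states:
  assumes "q > 0" "\<forall>l<k. density_mat p (R l) \<and> density_mat q (S l)"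
  shows "(\<Sum>x<p*q. \<Sum>l<k. of_real (d l) * R l (x div q) (x div q) * S l (x mod q) (x mod q))
       = of_real (\<Sum>l<(k::nat). d l)"
proof -
  have "(\<Sum>x<p*q. of_real (d l) * R l (x div q) (x div q) * S l (x mod q) (x mod q))
       = of_real (d l) * mtrace p (R l) * mtrace q (S l)" for l
    using sum_block_index[OF assms(1), of "\<lambda>a b. of_real (d l) * R l a a * S l b b" p]
    by (simp add: mtrace_def sum_distrib_left sum_product mult_ac)
  hence "(\<Sum>x<p*q. \<Sum>l<k. of_real (d l) * R l (x div q) (x div q) * S l (x mod q) (x mod q))
       = (\<Sum>l<k. of_real (d l) * mtrace p (R l) * mtrace q (S l))"
    by (subst sum.swap) simp
  also have "\<dots> = (\<Sum>l<k. of_real (d l))"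
    using assms(2) by (intro sum.cong) (auto simp: density_mat_def)
  finally show ?thesis by simp
qed

lemma sep_cone_separable:
  assumes "sep_cone q A" "p \<ge> 1" "q \<ge> 1" "t > 0" "mtrace (p*q) A = of_real t"
  shows "separable p q (\<lambda>x y. A x y / of_real t)"
proof -
  obtain k :: nat and c u w where c: "\<forall>l<k. c l \<ge> 0"
    and A: "A = (\<lambda>x y. \<Sum>l<k. kron_rank1 q (c l) (u l) (w l) x y)"
    using sep_cone_sum_repr[OF assms(1)] by blast
  have "\<forall>l. \<exists>d R S. l < k \<longrightarrow> product_term p q (kron_rank1 q (c l) (u l) (w l)) d R S"
    using kron_rank1_product_term[OF assms(2,3)] c by blast
  then obtain d R S
    where dRS: "\<And>l. l < k \<Longrightarrow> product_term p q (kron_rank1 q (c l) (u l) (w l)) (d l) (R l) (S l)"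
    by metis
  have dens: "\<forall>l<k. density_mat p (R l) \<and> density_mat q (S l)"
    using dRS by (simp add: product_term_def)
  have entries: "A x y = (\<Sum>l<k. of_real (d l) * R l (x div q) (y div q) * S l (x mod q) (y mod q))"
    if "x < p*q" "y < p*q" for x y
    unfolding A using dRS that by (intro sum.cong) (auto simp: product_term_def)
  have "of_real t = (\<Sum>x<p*q. \<Sum>l<k. of_real (d l) * R l (x div q) (x div q) * S l (x mod q) (x mod q))"
    using assms(5) entries by (simp add: mtrace_def)
  also have "\<dots> = of_real (\<Sum>l<k. d l)" using trace_product_states[OF _ dens] assms(3) by simp
  finally have "t = (\<Sum>l<k. d l)" by (simp only: of_real_eq_iff)
  hence "(\<Sum>l<k. d l / t) = 1" using assms(4) by (simp add: sum_divide_distrib[symmetric])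
  moreover have "\<forall>l<k. d l / t \<ge> 0" using dRS assms(4) by (simp add: product_term_def)
  moreover have "A x y / of_real t
      = (\<Sum>l<k. of_real (d l / t) * R l (x div q) (y div q) * S l (x mod q) (y mod q))"
    if "x < p*q" "y < p*q" for x y
    using entries[OF that] by (simp add: sum_divide_distrib)
  ultimately show ?thesis unfolding separable_def
    by (intro exI[of _ k] exI[of _ "\<lambda>l. d l / t"] exI[of _ R] exI[of _ S]) (use dens in auto)
qed

definition chi :: "nat \<Rightarrow> nat \<Rightarrow> complex" where
  "chi i x = (if x = i then 1 else 0)"

definition pair_lap :: "nat \<Rightarrow> nat \<Rightarrow> nat \<Rightarrow> nat \<Rightarrow> complex" where
  "pair_lap i j x y = (chi i x - chi j x) * (chi i y - chi j y)"

definition edge_lap :: "nat set \<Rightarrow> nat \<Rightarrow> nat \<Rightarrow> complex" where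
  "edge_lap e x y = (if x \<in> e \<and> y \<in> e then (if x = y then 1 else -1) else 0)"

lemma cnj_chi [simp]: "cnj (chi i x) = chi i x"
  by (simp add: chi_def)

lemma chi_block: "b < q \<Longrightarrow> chi a (x div q) * chi b (x mod q) = chi (a*q + b) x"
  by (auto simp: chi_def)

lemma edge_lap_pair: "i \<noteq> j \<Longrightarrow> edge_lap {i,j} = pair_lap i j"
  by (auto simp: edge_lap_def pair_lap_def chi_def fun_eq_iff)

lemma finite_all_edges: "finite (all_edges n)"
  by (rule finite_subset[of _ "Pow {..<n}"]) (auto simp: all_edges_def)

lemma all_edges_pair: "e \<in> all_edges n \<Longrightarrow> \<exists>i j. e = {i,j} \<and> i \<noteq> j \<and> i < n \<and> j < n"
  unfolding all_edges_def by auto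

lemma laplacian_edge_sum:
  assumes "E \<subseteq> all_edges n"
  shows "laplacian E x y = (\<Sum>e\<in>E. edge_lap e x y)"
proof -
  have fin: "finite E" using assms finite_all_edges finite_subset by blast
  show ?thesis
  proof (cases "x = y")
    case True
    have "bij_betw (\<lambda>j. {x,j}) {j. {x,j} \<in> E} {e\<in>E. x \<in> e}"
    proof (rule bij_betw_imageI)
      show "inj_on (\<lambda>j. {x,j}) {j. {x,j} \<in> E}"
        by (auto simp: inj_on_def doubleton_eq_iff)
      have "e \<in> (\<lambda>j. {x,j}) ` {j. {x,j} \<in> E}" if e: "e \<in> E" "x \<in> e" for e
      proof -
        obtain i j where "e = {i,j}" using all_edges_pair e(1) assms by blast
        with e have "e = {x, if x = i then j else i}" by auto
        thus ?thesis using e by auto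
      qed
      thus "(\<lambda>j. {x,j}) ` {j. {x,j} \<in> E} = {e\<in>E. x \<in> e}" by auto
    qed
    hence "degree E x = card {e\<in>E. x \<in> e}"
      unfolding degree_def by (rule bij_betw_same_card)
    moreover have "(\<Sum>e\<in>E. edge_lap e x y) = of_nat (card {e\<in>E. x \<in> e})"
      using True fin by (simp add: edge_lap_def sum.If_cases Int_def)
    moreover have "{x} \<notin> E" using assms unfolding all_edges_def by (auto simp: doubleton_eq_iff)
    ultimately show ?thesis using True by (simp add: laplacian_def adjacency_def)
  next
    case False
    have "(\<Sum>e\<in>E. edge_lap e x y) = (\<Sum>e\<in>E. if e = {x,y} then -1 else 0)"
    proof (intro sum.cong refl)
      fix e assume "e \<in> E"
      then obtain i j where "e = {i,j}" using assms all_edges_pair by blast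
      thus "edge_lap e x y = (if e = {x,y} then -1 else 0)" using False by (auto simp: edge_lap_def)
    qed
    also have "\<dots> = (if {x,y} \<in> E then -1 else 0)"
      using fin by (simp add: sum.delta')
    finally show ?thesis using False by (simp add: laplacian_def adjacency_def)
  qed
qed

text \<open>Every edge contributes \<open>2\<close> to the trace.\<close>

lemma trace_laplacian:
  assumes "E \<subseteq> all_edges n"
  shows "mtrace n (laplacian E) = of_nat (2 * card E)"
proof -
  have "(\<Sum>x<n. edge_lap e x x) = 2" if e: "e \<in> E" for e
  proof -
    obtain i j where ij: "e = {i,j}" "i \<noteq> j" "i < n" "j < n"
      using all_edges_pair e assms by blast
    have "(\<Sum>x<n. edge_lap e x x) = of_nat (card ({..<n} \<inter> e))"
      by (simp add: edge_lap_def sum.If_cases)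
    also have "{..<n} \<inter> e = e" using ij by auto
    finally show ?thesis using ij by simp
  qed
  hence "(\<Sum>x<n. \<Sum>e\<in>E. edge_lap e x x) = (\<Sum>e\<in>E. 2)"
    by (subst sum.swap) simp
  thus ?thesis unfolding mtrace_def laplacian_edge_sum[OF assms] by simp
qed

section \<open>Roots of unity\<close>

definition unit_root :: "nat \<Rightarrow> nat \<Rightarrow> complex" where
  "unit_root m k = cis (2*pi*real k / real m)"

lemma unit_root_cnj: "unit_root m k * cnj (unit_root m k) = 1"
  by (simp add: unit_root_def cis_cnj cis_mult)

lemma unit_root_pow: "m > 0 \<Longrightarrow> unit_root m k ^ m = 1"
proof -
  assume "m > 0"
  hence "unit_root m k ^ m = cis (2*pi*of_int (int k))" by (simp add: unit_root_def DeMoivre)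
  thus ?thesis by (metis cis_multiple_2pi Ints_of_int)
qed

lemma unit_root_orthogonality:
  assumes "t < m" "s < m"
  shows "(\<Sum>k<m. unit_root m k ^ t * cnj (unit_root m k) ^ s) = (if t = s then of_nat m else 0)"
proof -
  define w where "w = cis (2*pi*(real t - real s) / m)"
  have "real t * (2*pi*real k/m) + real s * -(2*pi*real k/m) = real k * (2*pi*(real t - real s) / m)"
    for k by (simp add: algebra_simps diff_divide_distrib)
  hence pw: "unit_root m k ^ t * cnj (unit_root m k) ^ s = w ^ k" for k
    by (simp add: unit_root_def w_def DeMoivre cis_cnj cis_mult)
  show ?thesis
  proof (cases "t = s")
    case True
    hence "w = 1" by (simp add: w_def)
    thus ?thesis unfolding pw using True by simp
  next
    case False
    have "w ^ m = cis (2*pi*of_int (int t - int s))" using assms by (simp add: w_def DeMoivre)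
    hence wm: "w ^ m = 1" by (metis cis_multiple_2pi Ints_of_int)
    have "w \<noteq> 1"
    proof
      assume "w = 1"
      then obtain n where "2*pi*(real t - real s) / m = of_int n * (2*pi)"
        by (auto simp: w_def cis_eq_1_iff)
      hence "2*pi*(real t - real s) = 2*pi*(real_of_int n * real m)"
        using assms by (simp add: field_simps)
      hence "real t - real s = real_of_int n * real m" by simp
      hence "real_of_int (int t - int s) = real_of_int (n * int m)" by simp
      hence "int t - int s = n * int m" by (simp only: of_int_eq_iff)
      moreover have "\<bar>int t - int s\<bar> < int m" using assms by auto
      ultimately have "\<bar>n\<bar> * int m < 1 * int m" by (simp add: abs_mult)
      hence "\<bar>n\<bar> < 1" by (simp only: mult_less_cancel_right)
      hence "n = 0" by simp
      thus False using \<open>int t - int s = n * int m\<close> False by simp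
    qed
    thus ?thesis using False geometric_sum[of w m] wm by (simp add: pw)
  qed
qed

lemma unit_root_average:
  fixes a b :: "nat \<Rightarrow> complex"
  shows "(\<Sum>k<m. (\<Sum>t<m. unit_root m k ^ t * a t) * (\<Sum>s<m. cnj (unit_root m k) ^ s * b s))
       = of_nat m * (\<Sum>t<m. a t * b t)"
proof -
  have "(\<Sum>k<m. (\<Sum>t<m. unit_root m k ^ t * a t) * (\<Sum>s<m. cnj (unit_root m k) ^ s * b s))
      = (\<Sum>k<m. \<Sum>t<m. \<Sum>s<m. a t * b s * (unit_root m k ^ t * cnj (unit_root m k) ^ s))"
    by (simp add: sum_product mult_ac)
  also have "\<dots> = (\<Sum>t<m. \<Sum>k<m. \<Sum>s<m. a t * b s * (unit_root m k ^ t * cnj (unit_root m k) ^ s))"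
    by (rule sum.swap)
  also have "\<dots> = (\<Sum>t<m. \<Sum>s<m. \<Sum>k<m. a t * b s * (unit_root m k ^ t * cnj (unit_root m k) ^ s))"
    by (intro sum.cong refl sum.swap)
  also have "\<dots> = (\<Sum>t<m. \<Sum>s<m. a t * b s * (\<Sum>k<m. unit_root m k ^ t * cnj (unit_root m k) ^ s))"
    by (simp add: sum_distrib_left)
  also have "\<dots> = (\<Sum>t<m. \<Sum>s<m. if t = s then of_nat m * (a t * b t) else 0)"
    by (intro sum.cong refl) (simp add: unit_root_orthogonality)
  finally show ?thesis by (simp add: sum_distrib_left)
qed

lemma sum_rotate:
  assumes "(m::nat) > 0"
  shows "(\<Sum>t<m. f ((t+1) mod m)) = (\<Sum>t<m. f t)"
proof -
  obtain m' where m: "m = Suc m'" using assms by (cases m) auto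
  have "(\<Sum>t<m. f ((t+1) mod m)) = f 0 + (\<Sum>t<m'. f (Suc t))"
    by (simp add: m add.commute)
  also have "\<dots> = (\<Sum>t<m. f t)" by (simp only: m sum.lessThan_Suc_shift)
  finally show ?thesis .
qed

lemma cycle_product_vector:
  assumes "z ^ m = 1" "z * cnj z = 1" "m = length cs" "set cs \<subseteq> {..<q}"
  shows "(chi a (x div q) - cnj z * chi c (x div q)) * (\<Sum>t<m. z ^ t * chi (cs!t) (x mod q))
       = (\<Sum>t<m. z ^ t * (chi (a*q + cs!t) x - chi (c*q + cs!((t+1) mod m)) x))"
proof (cases "m = 0")
  case True
  thus ?thesis by simp
next
  case False
  have cs_lt: "cs!t < q" if "t < m" for t using assms(3,4) that nth_mem by blast
  have shift: "cnj z * z ^ ((t+1) mod m) = z ^ t" if "t < m" for t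
  proof -
    have "z ^ ((t+1) mod m) = z ^ (t+1)"
    proof (cases "t + 1 < m")
      case False
      hence "t + 1 = m" using that by simp
      thus ?thesis using assms(1) by simp
    qed simp
    thus ?thesis using assms(2) by (simp add: mult_ac)
  qed
  have "(chi a (x div q) - cnj z * chi c (x div q)) * (\<Sum>t<m. z ^ t * chi (cs!t) (x mod q))
      = (\<Sum>t<m. z ^ t * chi (a*q + cs!t) x) - (\<Sum>t<m. cnj z * z ^ t * chi (c*q + cs!t) x)"
    by (simp add: algebra_simps sum_distrib_left sum_subtractf chi_block[OF cs_lt]
        flip: mult.assoc)
  also have "(\<Sum>t<m. cnj z * z ^ t * chi (c*q + cs!t) x)
      = (\<Sum>t<m. cnj z * z ^ ((t+1) mod m) * chi (c*q + cs!((t+1) mod m)) x)"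
    using sum_rotate[of m "\<lambda>s. cnj z * z ^ s * chi (c*q + cs!s) x"] False by simp
  also have "\<dots> = (\<Sum>t<m. z ^ t * chi (c*q + cs!((t+1) mod m)) x)"
    by (intro sum.cong refl) (simp only: shift lessThan_iff)
  finally show ?thesis by (simp add: right_diff_distrib sum_subtractf)
qed

text \<open>The Laplacian of a closed walk alternating between block \<open>a\<close> (positions \<open>cs!t\<close>) and
  block \<open>c\<close> (positions \<open>cs!(t+1)\<close>) is the average of \<open>m\<close> product rank-one matrices.\<close>

lemma cycle_laplacian_sep_cone:
  assumes "set cs \<subseteq> {..<q}"
  shows "sep_cone q (\<lambda>x y. \<Sum>t<length cs. pair_lap (a*q + cs!t) (c*q + cs!((t+1) mod length cs)) x y)"
proof -
  define m where "m = length cs"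
  define v where "v t x = chi (a*q + cs!t) x - chi (c*q + cs!((t+1) mod m)) x" for t x
  define u where "u k i = chi a i - cnj (unit_root m k) * chi c i" for k i
  define w where "w k b = (\<Sum>t<m. unit_root m k ^ t * chi (cs!t) b)" for k b
  have factor: "u k (x div q) * w k (x mod q) = (\<Sum>t<m. unit_root m k ^ t * v t x)" for k x
  proof (cases "m = 0")
    case False
    thus ?thesis unfolding u_def w_def v_def using assms
      by (intro cycle_product_vector) (simp_all add: unit_root_pow unit_root_cnj m_def)
  qed (simp add: w_def)
  have real_v: "cnj (v t x) = v t x" for t x by (simp add: v_def)
  have "(\<Sum>k<m. kron_rank1 q (1/m) (u k) (w k) x y) = (\<Sum>t<m. pair_lap (a*q + cs!t) (c*q + cs!((t+1) mod m)) x y)"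
    for x y
  proof -
    have "kron_rank1 q (1/m) (u k) (w k) x y
        = of_real (1/m) * ((\<Sum>t<m. unit_root m k ^ t * v t x) * (\<Sum>s<m. cnj (unit_root m k) ^ s * v s y))"
      for k
    proof -
      have "kron_rank1 q (1/m) (u k) (w k) x y
          = of_real (1/m) * ((u k (x div q) * w k (x mod q)) * cnj (u k (y div q) * w k (y mod q)))"
        by (simp add: kron_rank1_def mult_ac)
      also have "\<dots> = of_real (1/m) * ((\<Sum>t<m. unit_root m k ^ t * v t x) * (\<Sum>s<m. cnj (unit_root m k) ^ s * v s y))"
        by (simp only: factor cnj_sum complex_cnj_mult complex_cnj_power real_v)
      finally show ?thesis .
    qed
    hence "(\<Sum>k<m. kron_rank1 q (1/m) (u k) (w k) x y)
        = of_real (1/m) * (\<Sum>k<m. (\<Sum>t<m. unit_root m k ^ t * v t x) * (\<Sum>s<m. cnj (unit_root m k) ^ s * v s y))"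
      by (simp add: sum_distrib_left)
    also have "\<dots> = (\<Sum>t<m. v t x * v t y)"
      by (cases "m = 0") (simp_all add: unit_root_average)
    finally show ?thesis by (simp add: pair_lap_def v_def)
  qed
  moreover have "sep_cone q (\<lambda>x y. \<Sum>k<m. kron_rank1 q (1/m) (u k) (w k) x y)"
    by (rule sep_cone_sum) (auto intro: sep_cone_kron)
  ultimately show ?thesis by (simp add: m_def)
qed

section \<open>Balanced arc sets decompose into cycles\<close>

definition balanced :: "(nat \<times> nat) set \<Rightarrow> bool" where
  "balanced A \<longleftrightarrow> (\<forall>v. card {e\<in>A. fst e = v} = card {e\<in>A. snd e = v})"

definition cycle_arc :: "nat list \<Rightarrow> nat \<Rightarrow> nat \<times> nat" where
  "cycle_arc cs t = (cs!t, cs!((t+1) mod length cs))"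

definition cycle_arcs :: "nat list \<Rightarrow> (nat \<times> nat) set" where
  "cycle_arcs cs = cycle_arc cs ` {..<length cs}"

lemma card_filter_sum: "finite S \<Longrightarrow> card {t\<in>S. P t} = (\<Sum>t\<in>S. if P t then 1 else 0)"
  by (simp add: sum.If_cases Int_def Collect_conj_eq[symmetric] conj_commute)

lemma inj_cycle_arc: "distinct cs \<Longrightarrow> inj_on (cycle_arc cs) {..<length cs}"
  unfolding inj_on_def cycle_arc_def by (auto simp: nth_eq_iff_index_eq)

lemma cycle_arcs_balanced:
  assumes "distinct cs"
  shows "card {e\<in>cycle_arcs cs. fst e = v} = card {e\<in>cycle_arcs cs. snd e = v}"
proof (cases "cs = []")
  case False
  let ?m = "length cs"
  have inj: "inj_on (cycle_arc cs) {t\<in>{..<?m}. P t}" for P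
    using inj_cycle_arc[OF assms] by (rule inj_on_subset) auto
  have "card {e\<in>cycle_arcs cs. fst e = v} = card {t\<in>{..<?m}. cs!t = v}"
    unfolding cycle_arcs_def
    by (subst card_image[OF inj, symmetric]) (auto simp: cycle_arc_def intro: arg_cong[where f=card])
  also have "\<dots> = (\<Sum>t<?m. if cs!t = v then 1 else 0)" by (rule card_filter_sum) simp
  also have "\<dots> = (\<Sum>t<?m. if cs!((t+1) mod ?m) = v then 1 else 0)"
    by (rule sum_rotate[symmetric]) (use False in simp)
  also have "\<dots> = card {t\<in>{..<?m}. cs!((t+1) mod ?m) = v}" by (rule card_filter_sum[symmetric]) simp
  also have "\<dots> = card {e\<in>cycle_arcs cs. snd e = v}"
    unfolding cycle_arcs_def
    by (subst card_image[OF inj, symmetric]) (auto simp: cycle_arc_def intro: arg_cong[where f=card])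
  finally show ?thesis .
qed (simp add: cycle_arcs_def)

lemma balanced_diff_cycle:
  assumes "finite A" "balanced A" "distinct cs" "cycle_arcs cs \<subseteq> A"
  shows "balanced (A - cycle_arcs cs)"
  unfolding balanced_def
proof
  fix v
  let ?C = "cycle_arcs cs"
  have "card {e\<in>A - ?C. fst e = v} = card ({e\<in>A. fst e = v} - {e\<in>?C. fst e = v})"
    by (rule arg_cong[where f=card]) auto
  also have "\<dots> = card {e\<in>A. fst e = v} - card {e\<in>?C. fst e = v}"
    using assms(1,4) by (intro card_Diff_subset) (auto intro: finite_subset)
  also have "\<dots> = card {e\<in>A. snd e = v} - card {e\<in>?C. snd e = v}"
    using assms(2) cycle_arcs_balanced[OF assms(3)] unfolding balanced_def by simp
  also have "\<dots> = card ({e\<in>A. snd e = v} - {e\<in>?C. snd e = v})"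
    using assms(1,4) by (intro card_Diff_subset[symmetric]) (auto intro: finite_subset)
  also have "\<dots> = card {e\<in>A - ?C. snd e = v}"
    by (rule arg_cong[where f=card]) auto
  finally show "card {e\<in>A - ?C. fst e = v} = card {e\<in>A - ?C. snd e = v}" .
qed

text \<open>In a finite balanced arc set a walk can always be continued, so it runs forever.\<close>

lemma balanced_infinite_walk:
  assumes "finite A" "balanced A" "(b0, d0) \<in> A"
  shows "\<exists>f. \<forall>n. (f n, f (Suc n)) \<in> A"
proof -
  have out: "\<exists>d. (v, d) \<in> A" if "(b, v) \<in> A" for b v
  proof -
    have "{e\<in>A. snd e = v} \<noteq> {}" using that by auto
    hence "card {e\<in>A. snd e = v} \<noteq> 0" using assms(1) by simp
    hence "card {e\<in>A. fst e = v} \<noteq> 0" using assms(2) unfolding balanced_def by simp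
    hence "{e\<in>A. fst e = v} \<noteq> {}" by (metis card.empty)
    thus ?thesis by auto
  qed
  define next_vertex where "next_vertex v = (SOME d. (v, d) \<in> A)" for v
  define f where "f n = (next_vertex ^^ n) d0" for n
  have "(f n, f (Suc n)) \<in> A \<and> (\<exists>b. (b, f n) \<in> A)" for n
  proof (induction n)
    case 0
    thus ?case using out[OF assms(3)] assms(3) by (auto simp: f_def next_vertex_def intro: someI_ex)
  next
    case (Suc n)
    then obtain b where "(b, f (Suc n)) \<in> A" by blast
    thus ?case using out by (auto simp: f_def next_vertex_def intro: someI_ex)
  qed
  thus ?thesis by blast
qed

text \<open>An infinite walk in a finite arc set repeats a vertex; the shortest repetition is a cycle.\<close>

lemma infinite_walk_cycle:
  assumes "finite A" "\<forall>n. (f n, f (Suc n)) \<in> A"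
  shows "\<exists>cs. cs \<noteq> [] \<and> distinct cs \<and> cycle_arcs cs \<subseteq> A"
proof -
  have "f ` UNIV \<subseteq> fst ` A" using assms(2) by force
  hence "\<not> inj f" using assms(1) by (metis finite_imageI finite_subset infinite_UNIV_nat finite_imageD)
  then obtain i0 j0 where "f i0 = f j0" "i0 < j0" unfolding inj_def by (metis linorder_neqE_nat)
  hence rep: "\<exists>d i. 0 < d \<and> f i = f (i + d)" by (intro exI[of _ "j0 - i0"] exI[of _ i0]) auto
  define d where "d = (LEAST d. \<exists>i. 0 < d \<and> f i = f (i + d))"
  obtain i where d: "0 < d" "f i = f (i + d)"
    using LeastI_ex[OF rep] unfolding d_def by blast
  have shortest: "f i' \<noteq> f (i' + d')" if "0 < d'" "d' < d" for i' d'
    using not_less_Least[of d' "\<lambda>d. \<exists>i. 0 < d \<and> f i = f (i + d)"] that unfolding d_def by blast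
  define cs where "cs = map (\<lambda>t. f (i + t)) [0..<d]"
  have "f (i + t) \<noteq> f (i + t')" if "t < t'" "t' < d" for t t'
    using shortest[of "t' - t" "i + t"] that by simp
  hence "inj_on (\<lambda>t. f (i + t)) {0..<d}"
    unfolding inj_on_def by (metis atLeastLessThan_iff linorder_neqE_nat)
  hence "distinct cs" by (simp add: cs_def distinct_map)
  moreover have "cycle_arcs cs \<subseteq> A"
  proof
    fix e assume "e \<in> cycle_arcs cs"
    then obtain t where t: "t < d" "e = cycle_arc cs t" by (auto simp: cycle_arcs_def cs_def)
    have "f (i + (t+1) mod d) = f (Suc (i + t))"
    proof (cases "t + 1 < d")
      case False
      hence "t + 1 = d" using t(1) by simp
      hence "Suc (i + t) = i + d" "(t + 1) mod d = 0" by simp_all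
      thus ?thesis using d(2) by (simp only: add_0_right)
    qed simp
    hence "e = (f (i + t), f (Suc (i + t)))" using t d(1) by (simp add: cycle_arc_def cs_def)
    thus "e \<in> A" using assms(2) by simp
  qed
  moreover have "cs \<noteq> []" using d(1) by (simp add: cs_def)
  ultimately show ?thesis by blast
qed

text \<open>The arcs \<open>(b,d)\<close> stand for the edges \<open>{a*q+b, c*q+d}\<close> between blocks \<open>a\<close> and \<open>c\<close>; the
  Laplacian of such an edge set is in the cone when the arc set is balanced, because it is then an
  edge-disjoint union of cycles (\<open>cycle_laplacian_sep_cone\<close>).\<close>

lemma balanced_laplacian_sep_cone:
  assumes "finite A" "balanced A" "A \<subseteq> {..<q} \<times> {..<q}"
  shows "sep_cone q (\<lambda>x y. \<Sum>e\<in>A. pair_lap (a*q + fst e) (c*q + snd e) x y)"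
  using assms
proof (induction "card A" arbitrary: A rule: less_induct)
  case less
  show ?case
  proof (cases "A = {}")
    case True
    thus ?thesis by (simp add: sep_cone.zero)
  next
    case False
    then obtain b0 d0 where "(b0, d0) \<in> A" by auto
    then obtain cs where cs: "cs \<noteq> []" "distinct cs" "cycle_arcs cs \<subseteq> A"
      using balanced_infinite_walk infinite_walk_cycle less.prems(1,2) by metis
    let ?C = "cycle_arcs cs"
    let ?g = "\<lambda>x y e. pair_lap (a*q + fst e) (c*q + snd e) x y"
    have "?C \<noteq> {}" using cs(1) by (auto simp: cycle_arcs_def)
    hence "card (A - ?C) < card A"
      using cs(3) less.prems(1) by (intro psubset_card_mono) auto
    hence rest: "sep_cone q (\<lambda>x y. \<Sum>e\<in>A - ?C. ?g x y e)"
      using less.hyps less.prems balanced_diff_cycle[OF less.prems(1,2) cs(2,3)] by auto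
    have "set cs \<subseteq> {..<q}"
    proof
      fix v assume "v \<in> set cs"
      then obtain t where "t < length cs" "v = cs!t" by (auto simp: in_set_conv_nth)
      hence "cycle_arc cs t \<in> A" using cs(3) by (auto simp: cycle_arcs_def)
      thus "v \<in> {..<q}" using less.prems(3) \<open>v = cs!t\<close> by (auto simp: cycle_arc_def)
    qed
    moreover have "(\<Sum>e\<in>?C. ?g x y e)
        = (\<Sum>t<length cs. pair_lap (a*q + cs!t) (c*q + cs!((t+1) mod length cs)) x y)" for x y
      unfolding cycle_arcs_def sum.reindex[OF inj_cycle_arc[OF cs(2)]] by (simp add: cycle_arc_def)
    ultimately have cycle: "sep_cone q (\<lambda>x y. \<Sum>e\<in>?C. ?g x y e)"
      using cycle_laplacian_sep_cone by presburger
    have "(\<Sum>e\<in>A. ?g x y e) = (\<Sum>e\<in>A - ?C. ?g x y e) + (\<Sum>e\<in>?C. ?g x y e)" for x y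
      by (rule sum.subset_diff[OF cs(3) less.prems(1)])
    thus ?thesis using sep_cone_add[OF rest cycle] by presburger
  qed
qed

section \<open>Graphs whose off-diagonal blocks are line sum symmetric\<close>

definition block_matrix :: "nat \<Rightarrow> nat set set \<Rightarrow> nat \<Rightarrow> nat \<Rightarrow> nat \<Rightarrow> nat \<Rightarrow> nat" where
  "block_matrix q E a c b d = (if b < q \<and> d < q \<and> {a*q + b, c*q + d} \<in> E then 1 else 0)"

definition lss_block_graph :: "nat \<Rightarrow> nat \<Rightarrow> nat set set \<Rightarrow> bool" where
  "lss_block_graph p q E \<longleftrightarrow> E \<in> graphs (p*q) \<and>
     (\<forall>a c. a < c \<and> c < p \<longrightarrow> line_sum_symmetric q (block_matrix q E a c))"

lemma line_sum_symmetric_balanced: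
  assumes "line_sum_symmetric q M" "\<forall>b d. M b d \<in> {0, 1}"
  shows "balanced {(b, d). b < q \<and> d < q \<and> M b d = 1}" (is "balanced ?A")
  unfolding balanced_def
proof
  fix v
  have indicator: "(if M b d = 1 then 1 else 0) = M b d" for b d
    using assms(2) by (metis insertE singletonD)
  show "card {e\<in>?A. fst e = v} = card {e\<in>?A. snd e = v}"
  proof (cases "v < q")
    case True
    have "card {e\<in>?A. fst e = v} = card {d\<in>{..<q}. M v d = 1}"
      using True by (intro bij_betw_same_card[of snd]) (auto simp: bij_betw_def inj_on_def image_def)
    also have "\<dots> = (\<Sum>d<q. M v d)" by (simp only: card_filter_sum[OF finite_lessThan] indicator)
    also have "\<dots> = (\<Sum>d<q. M d v)" using assms(1) True by (simp add: line_sum_symmetric_def)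
    also have "\<dots> = card {b\<in>{..<q}. M b v = 1}" by (simp only: card_filter_sum[OF finite_lessThan] indicator)
    also have "\<dots> = card {e\<in>?A. snd e = v}"
      using True by (intro bij_betw_same_card[of "\<lambda>b. (b, v)"]) (auto simp: bij_betw_def inj_on_def image_def)
    finally show ?thesis .
  next
    case False
    hence "{e\<in>?A. fst e = v} = {}" "{e\<in>?A. snd e = v} = {}" by auto
    thus ?thesis by (simp only: card.empty)
  qed
qed

definition blocks :: "nat \<Rightarrow> nat set \<Rightarrow> nat set" where
  "blocks q e = (\<lambda>i. i div q) ` e"

lemma intra_block_pair_lap:
  assumes "i div q = j div q"
  shows "pair_lap i j = kron_rank1 q 1 (chi (i div q)) (\<lambda>b. chi (i mod q) b - chi (j mod q) b)"
proof (intro ext)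
  fix x y
  have split: "chi k z = chi (k div q) (z div q) * chi (k mod q) (z mod q)" for k z
    by (auto simp: chi_def) (metis div_mult_mod_eq)
  show "pair_lap i j x y = kron_rank1 q 1 (chi (i div q)) (\<lambda>b. chi (i mod q) b - chi (j mod q) b) x y"
    unfolding pair_lap_def kron_rank1_def
    by (simp only: split[of i x] split[of j x] split[of i y] split[of j y] assms) (simp add: algebra_simps)
qed

lemma intra_block_laplacian_sep_cone:
  assumes "E \<subseteq> all_edges n"
  shows "sep_cone q (\<lambda>x y. \<Sum>e\<in>{e\<in>E. blocks q e = {a}}. edge_lap e x y)"
proof (rule sep_cone_sum)
  show "finite {e\<in>E. blocks q e = {a}}"
    using finite_subset[OF assms finite_all_edges] by simp
  fix e assume e: "e \<in> {e\<in>E. blocks q e = {a}}"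
  then obtain i j where ij: "e = {i,j}" "i \<noteq> j" using assms all_edges_pair by blast
  hence "i div q = j div q" using e by (auto simp: blocks_def)
  thus "sep_cone q (edge_lap e)"
    using ij by (simp add: edge_lap_pair intra_block_pair_lap sep_cone_kron)
qed

lemma inter_block_edges:
  assumes "E \<subseteq> all_edges n" "a < c" "q > 0"
  defines "h \<equiv> \<lambda>(b, d). {a*q + b, c*q + d}"
  shows "{e\<in>E. blocks q e = {a, c}} = h ` {(b, d). b < q \<and> d < q \<and> block_matrix q E a c b d = 1}"
    and "inj_on h {(b, d). b < q \<and> d < q}"
proof -
  have distinct: "a*q + b \<noteq> c*q + d" if "b < q" "d < q" for b d
    using assms(2) that block_index_eq_iff by auto
  show "inj_on h {(b, d). b < q \<and> d < q}"
    using assms(2) by (auto simp: inj_on_def h_def doubleton_eq_iff block_index_eq_iff dest: distinct)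
  have arcs: "{(b, d). b < q \<and> d < q \<and> block_matrix q E a c b d = 1}
      = {(b, d). b < q \<and> d < q \<and> h (b, d) \<in> E}"
    by (auto simp: block_matrix_def h_def)
  show "{e\<in>E. blocks q e = {a, c}} = h ` {(b, d). b < q \<and> d < q \<and> block_matrix q E a c b d = 1}"
    unfolding arcs
  proof (intro equalityI subsetI)
    fix e assume "e \<in> {e\<in>E. blocks q e = {a, c}}"
    hence e: "e \<in> E" "blocks q e = {a, c}" by simp_all
    obtain i j where ij: "e = {i,j}" using e(1) assms(1) all_edges_pair by blast
    have mod: "i mod q < q" "j mod q < q" using assms(3) by simp_all
    have "{i div q, j div q} = {a, c}" using e(2) ij by (simp add: blocks_def)
    hence "(i div q = a \<and> j div q = c) \<or> (i div q = c \<and> j div q = a)" by (auto simp: doubleton_eq_iff)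
    hence "e = h (i mod q, j mod q) \<or> e = h (j mod q, i mod q)"
      unfolding ij h_def by (metis div_mult_mod_eq case_prod_conv insert_commute)
    thus "e \<in> h ` {(b, d). b < q \<and> d < q \<and> h (b, d) \<in> E}" using e(1) mod by auto
  next
    fix e assume "e \<in> h ` {(b, d). b < q \<and> d < q \<and> h (b, d) \<in> E}"
    thus "e \<in> {e\<in>E. blocks q e = {a, c}}" by (auto simp: blocks_def h_def)
  qed
qed

lemma inter_block_laplacian_sep_cone:
  assumes "E \<subseteq> all_edges n" "a < c" "q > 0" "line_sum_symmetric q (block_matrix q E a c)"
  shows "sep_cone q (\<lambda>x y. \<Sum>e\<in>{e\<in>E. blocks q e = {a, c}}. edge_lap e x y)"
proof -
  define A where "A = {(b, d). b < q \<and> d < q \<and> block_matrix q E a c b d = 1}"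
  have "A \<subseteq> {..<q} \<times> {..<q}" by (auto simp: A_def)
  hence "finite A" by (rule finite_subset) simp
  moreover have "balanced A" unfolding A_def
    by (rule line_sum_symmetric_balanced[OF assms(4)]) (simp add: block_matrix_def)
  ultimately have cone: "sep_cone q (\<lambda>x y. \<Sum>e\<in>A. pair_lap (a*q + fst e) (c*q + snd e) x y)"
    using \<open>A \<subseteq> _\<close> by (rule balanced_laplacian_sep_cone)
  have inj: "inj_on (\<lambda>(b, d). {a*q + b, c*q + d}) A"
    using inter_block_edges(2)[OF assms(1-3)] by (rule inj_on_subset) (auto simp: A_def)
  have "(\<Sum>e\<in>{e\<in>E. blocks q e = {a, c}}. edge_lap e x y)
      = (\<Sum>e\<in>A. pair_lap (a*q + fst e) (c*q + snd e) x y)" for x y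
  proof -
    have "a*q + b \<noteq> c*q + d" if "b < q" "d < q" for b d
      using assms(2) that block_index_eq_iff by auto
    thus ?thesis
      unfolding inter_block_edges(1)[OF assms(1-3)] A_def[symmetric] sum.reindex[OF inj]
      by (intro sum.cong refl) (auto simp: A_def edge_lap_pair)
  qed
  thus ?thesis using cone by simp
qed

text \<open>Grouping the edges by the blocks they meet: a graph whose off-diagonal blocks are line sum
  symmetric has its Laplacian in the separable cone.\<close>

lemma lss_block_graph_sep_cone:
  assumes "lss_block_graph p q E" "q > 0"
  shows "sep_cone q (laplacian E)"
proof -
  have E: "E \<subseteq> all_edges (p*q)" using assms(1) by (simp add: lss_block_graph_def graphs_def)
  have fin: "finite E" using E finite_all_edges finite_subset by blast
  have "laplacian E = (\<lambda>x y. \<Sum>P\<in>blocks q ` E. \<Sum>e\<in>{e\<in>E. blocks q e = P}. edge_lap e x y)"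
    using fin by (simp add: laplacian_edge_sum[OF E] sum.group fun_eq_iff)
  moreover have groups: "sep_cone q (\<lambda>x y. \<Sum>e\<in>{e\<in>E. blocks q e = P}. edge_lap e x y)"
    if P_in: "P \<in> blocks q ` E" for P
  proof -
    obtain e where e: "e \<in> E" "P = blocks q e" using P_in by blast
    then obtain i j where ij: "e = {i,j}" "i < p*q" "j < p*q" using E all_edges_pair by blast
    have P: "P = {i div q, j div q}" using e(2) ij(1) by (simp add: blocks_def)
    have lt: "i div q < p" "j div q < p" using ij(2,3) by (simp_all add: block_of_lt)
    consider "i div q = j div q" | "i div q < j div q" | "j div q < i div q" by linarith
    thus ?thesis
    proof cases
      case 1
      thus ?thesis using P intra_block_laplacian_sep_cone[OF E] by simp
    next
      case 2
      thus ?thesis using assms lt P inter_block_laplacian_sep_cone[OF E]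
        by (simp add: lss_block_graph_def)
    next
      case 3
      moreover have "P = {j div q, i div q}" using P by auto
      ultimately show ?thesis using assms lt inter_block_laplacian_sep_cone[OF E]
        by (simp add: lss_block_graph_def)
    qed
  qed
  ultimately show ?thesis using fin by (simp add: sep_cone_sum)
qed

lemma lss_block_graph_separable:
  assumes "lss_block_graph p q E" "E \<noteq> {}" "p \<ge> 1" "q \<ge> 1"
  shows "separable p q (normalized_laplacian (p*q) E)"
proof -
  have E: "E \<subseteq> all_edges (p*q)" using assms(1) by (simp add: lss_block_graph_def graphs_def)
  hence "card E > 0" using assms(2) finite_all_edges finite_subset card_gt_0_iff by blast
  moreover have "mtrace (p*q) (laplacian E) = of_real (real (2 * card E))"
    using trace_laplacian[OF E] by simp
  ultimately have "separable p q (\<lambda>x y. laplacian E x y / of_real (real (2 * card E)))"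
    using lss_block_graph_sep_cone[OF assms(1)] assms(3,4) by (intro sep_cone_separable) auto
  moreover have "normalized_laplacian (p*q) E = (\<lambda>x y. laplacian E x y / of_real (real (2 * card E)))"
    using trace_laplacian[OF E] by (simp add: normalized_laplacian_def fun_eq_iff)
  ultimately show ?thesis by simp
qed

section \<open>Counting graphs glued from blocks\<close>

lemma card_all_edges: "card (all_edges n) = n * (n - 1) div 2"
proof -
  have "all_edges n = {B. B \<subseteq> {..<n} \<and> card B = 2}"
    unfolding all_edges_def by (auto simp: card_2_iff)
  thus ?thesis by (simp add: n_subsets choose_two)
qed

lemma graphs_Pow: "graphs n = Pow (all_edges n)"
  unfolding graphs_def by auto

lemma card_graphs: "card (graphs n) = 2 ^ (n * (n - 1) div 2)"
  unfolding graphs_Pow by (simp add: card_Pow finite_all_edges card_all_edges)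

lemma ordered_pair_in_all_edges: "a < c \<Longrightarrow> c < n \<Longrightarrow> {a, c} \<in> all_edges n"
  unfolding all_edges_def by (intro CollectI exI[of _ a] exI[of _ c]) simp

definition lss_mats :: "nat \<Rightarrow> (nat \<Rightarrow> nat \<Rightarrow> nat) set" where
  "lss_mats q = {M \<in> zero_one_mats q. line_sum_symmetric q M}"

text \<open>The data from which a graph on \<open>p*q\<close> vertices is glued: an arbitrary graph on every
  diagonal block and a line sum symmetric 0-1 matrix for every pair of distinct blocks.\<close>

definition block_data :: "nat \<Rightarrow> nat \<Rightarrow> ((nat \<Rightarrow> nat set set) \<times> (nat set \<Rightarrow> nat \<Rightarrow> nat \<Rightarrow> nat)) set" where
  "block_data p q = PiE {..<p} (\<lambda>_. graphs q) \<times> PiE (all_edges p) (\<lambda>_. lss_mats q)"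

lemma card_block_data:
  "card (block_data p q) = 2 ^ (p * q * (q - 1) div 2) * N_s q ^ (p * (p - 1) div 2)"
proof -
  have "even (q * (q - 1))" by auto
  hence "p * q * (q - 1) div 2 = (q * (q - 1) div 2) * p"
    by (metis (no_types) dvd_div_mult mult.assoc mult.commute)
  thus ?thesis
    unfolding block_data_def
    by (simp add: card_cartesian_product card_PiE finite_all_edges card_graphs card_all_edges
        N_s_def lss_mats_def power_mult)
qed

text \<open>Adjacency in the glued graph: inside a block it is given by the block's graph, between
  blocks \<open>a < c\<close> by the matrix attached to \<open>{a, c}\<close> (rows in block \<open>a\<close>).\<close>

definition glue_adj :: "nat \<Rightarrow> (nat \<Rightarrow> nat set set) \<Rightarrow> (nat set \<Rightarrow> nat \<Rightarrow> nat \<Rightarrow> nat) \<Rightarrow> nat \<Rightarrow> nat \<Rightarrow> bool"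
  where "glue_adj q G M x y \<longleftrightarrow>
    (x div q = y div q \<and> {x mod q, y mod q} \<in> G (x div q)) \<or>
    (x div q < y div q \<and> M {x div q, y div q} (x mod q) (y mod q) = 1) \<or>
    (y div q < x div q \<and> M {x div q, y div q} (y mod q) (x mod q) = 1)"

definition glue :: "nat \<Rightarrow> nat \<Rightarrow> (nat \<Rightarrow> nat set set) \<times> (nat set \<Rightarrow> nat \<Rightarrow> nat \<Rightarrow> nat) \<Rightarrow> nat set set"
  where "glue p q D = {{x, y} | x y. x < p*q \<and> y < p*q \<and> x \<noteq> y \<and> glue_adj q (fst D) (snd D) x y}"

lemma glue_adj_sym: "glue_adj q G M x y \<longleftrightarrow> glue_adj q G M y x"
  unfolding glue_adj_def by (auto simp: insert_commute)

lemma glue_edge_iff: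
  "{x, y} \<in> glue p q D \<longleftrightarrow> x < p*q \<and> y < p*q \<and> x \<noteq> y \<and> glue_adj q (fst D) (snd D) x y"
  unfolding glue_def by (auto simp: doubleton_eq_iff glue_adj_sym)

lemma glue_in_graphs: "glue p q D \<in> graphs (p*q)"
  unfolding glue_def graphs_def all_edges_def by blast

text \<open>The block data can be read off the glued graph, which is therefore injective.\<close>

lemma glue_intra_block:
  assumes "a < p" "i < q" "j < q" "i \<noteq> j"
  shows "{a*q + i, a*q + j} \<in> glue p q D \<longleftrightarrow> {i, j} \<in> fst D a"
  using assms by (simp add: glue_edge_iff glue_adj_def block_index_lt)

lemma block_matrix_glue:
  assumes "D \<in> block_data p q" "a < c" "c < p"
  shows "block_matrix q (glue p q D) a c = snd D {a, c}"
proof (intro ext)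
  fix b d
  have "{a, c} \<in> all_edges p" using assms(2,3) by (rule ordered_pair_in_all_edges)
  hence M: "snd D {a, c} \<in> zero_one_mats q"
    using assms(1) by (auto simp: block_data_def lss_mats_def mem_Times_iff)
  show "block_matrix q (glue p q D) a c b d = snd D {a, c} b d"
  proof (cases "b < q \<and> d < q")
    case True
    hence "a*q + b \<noteq> c*q + d" using assms(2) block_index_eq_iff by auto
    hence "{a*q + b, c*q + d} \<in> glue p q D \<longleftrightarrow> snd D {a, c} b d = 1"
      using True assms(2,3) by (simp add: glue_edge_iff glue_adj_def block_index_lt)
    moreover have "snd D {a, c} b d \<in> {0, 1}" using M by (simp add: zero_one_mats_def)
    ultimately show ?thesis using True by (auto simp: block_matrix_def)
  next
    case False
    thus ?thesis using M by (auto simp: block_matrix_def zero_one_mats_def)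
  qed
qed

lemma glue_lss_block_graph:
  assumes "D \<in> block_data p q"
  shows "lss_block_graph p q (glue p q D)"
proof -
  have "line_sum_symmetric q (snd D {a, c})" if "a < c" "c < p" for a c
  proof -
    have "{a, c} \<in> all_edges p" using that by (rule ordered_pair_in_all_edges)
    thus ?thesis using assms by (auto simp: block_data_def lss_mats_def mem_Times_iff)
  qed
  thus ?thesis using assms glue_in_graphs block_matrix_glue by (simp add: lss_block_graph_def)
qed

lemma inj_glue: "inj_on (glue p q) (block_data p q)"
proof
  fix D D' assume D: "D \<in> block_data p q" and D': "D' \<in> block_data p q"
    and eq: "glue p q D = glue p q D'"
  have Pi: "fst D \<in> PiE {..<p} (\<lambda>_. graphs q)" "fst D' \<in> PiE {..<p} (\<lambda>_. graphs q)"
    "snd D \<in> PiE (all_edges p) (\<lambda>_. lss_mats q)" "snd D' \<in> PiE (all_edges p) (\<lambda>_. lss_mats q)"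
    using D D' by (simp_all add: block_data_def mem_Times_iff)
  have "fst D a = fst D' a" for a
  proof (cases "a < p")
    case True
    hence sub: "fst D a \<subseteq> all_edges q" "fst D' a \<subseteq> all_edges q"
      using Pi(1,2) by (auto simp: graphs_def)
    have same_edges: "e \<in> fst D a \<longleftrightarrow> e \<in> fst D' a" if e: "e \<in> all_edges q" for e
    proof -
      obtain i j where ij: "e = {i, j}" "i \<noteq> j" "i < q" "j < q" using e all_edges_pair by blast
      have "e \<in> fst D a \<longleftrightarrow> {a*q + i, a*q + j} \<in> glue p q D"
        using glue_intra_block[OF True ij(3,4,2)] ij(1) by simp
      also have "\<dots> \<longleftrightarrow> e \<in> fst D' a"
        using glue_intra_block[OF True ij(3,4,2)] ij(1) eq by simp
      finally show ?thesis .
    qed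
    show ?thesis
    proof (rule set_eqI)
      fix e
      show "e \<in> fst D a \<longleftrightarrow> e \<in> fst D' a"
        using same_edges[of e] sub by (cases "e \<in> all_edges q") auto
    qed
  next
    case False
    thus ?thesis using PiE_arb[OF Pi(1)] PiE_arb[OF Pi(2)] by simp
  qed
  moreover have "snd D P = snd D' P" for P
  proof (cases "P \<in> all_edges p")
    case True
    then obtain a c where "P = {a, c}" "a < c" "c < p"
      unfolding all_edges_def by (auto elim!: linorder_neqE_nat simp: insert_commute)
    thus ?thesis using block_matrix_glue[OF D] block_matrix_glue[OF D'] eq by simp
  next
    case False
    thus ?thesis using PiE_arb[OF Pi(3)] PiE_arb[OF Pi(4)] by simp
  qed
  ultimately show "D = D'" by (simp add: prod_eq_iff fun_eq_iff)
qed

theorem mainTheorem1: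
  fixes p q :: nat
  assumes "p \<ge> 1" and "q \<ge> 1"
  shows "int (L_s p q) \<ge> 2 ^ (p * q * (q - 1) div 2) * int (N_s q) ^ (p * (p - 1) div 2) - 1"
proof -
  define LSG where "LSG = {E. lss_block_graph p q E}"
  have fin: "finite LSG"
    by (rule finite_subset[of _ "graphs (p*q)"])
       (auto simp: LSG_def lss_block_graph_def graphs_Pow finite_all_edges)
  have "card (block_data p q) \<le> card LSG"
    using inj_glue glue_lss_block_graph fin by (intro card_inj_on_le) (auto simp: LSG_def)
  moreover have "{} \<in> LSG"
    by (simp add: LSG_def lss_block_graph_def graphs_def block_matrix_def line_sum_symmetric_def)
  moreover have "LSG - {{}} \<subseteq> {E \<in> graphs (p*q). E \<noteq> {} \<and> separable p q (normalized_laplacian (p*q) E)}"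
    using lss_block_graph_separable assms by (auto simp: LSG_def lss_block_graph_def)
  hence "card (LSG - {{}}) \<le> L_s p q"
    unfolding L_s_def by (rule card_mono[rotated]) (simp add: graphs_Pow finite_all_edges)
  ultimately have "int (card (block_data p q)) - 1 \<le> int (L_s p q)"
    using fin by (simp add: card_Diff_singleton)
  thus ?thesis by (simp add: card_block_data)
qed

end
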